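(* Let $n=4$. List the eight tilings, encoded as 0/1 strings indicating membership of $123,124,134,234$ respectively, in the cyclic order (the octahedral wheel) $0000,1000,1100,1110,1111,0111,0011,0001$ (and back to $0000$). Then the maximal (by inclusion) Condorcet super-domains are exactly: (I) the sets of five cyclically consecutive tilings in this cyclic order, and (II) the sets consisting of two distinct pairs $\{T,\Lambda\setminus T\}$, $\{T',\Lambda\setminus T'\}$ of opposite tilings. Moreover, if $\mathbf D$ is a set of one of these two types, then for every finite set $V$ of odd cardinality and every family $(T_v)_{v\in V}$ of tilings in $\mathbf D$, $sm((T_v)_{v\in V})=T_w$ for some $w\in V$.
   Context: Here $n=4$, $\Lambda$ is the set of 3-element subsets $\{123,124,134,234\}$ of $\{1,2,3,4\}$, and a tiling is a subset $T\subseteq\Lambda$ which is an initial or final segment of the sequence $(123,124,134,234)$ (empty set and $\Lambda$ allowed); there are exactly eight tilings. For a finite set $V$ of odd cardinality and tilings $(T_v)_{v\in V}$, $sm((T_v)_{v\in V})$ is the set of triples lying in $T_v$ for more than $|V|/2$ indices $v$. A set $\mathbf D$ of tilings is a Condorcet super-domain if for every finite $V$ of odd cardinality and every family $(T_v)_{v\in V}$ with all $T_v\in\mathbf D$, $sm((T_v)_{v\in V})$ is a tiling. *)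

theory Defs
  imports Main
begin

definition t123 :: "nat set" where "t123 = {1,2,3}"
definition t124 :: "nat set" where "t124 = {1,2,4}"
definition t134 :: "nat set" where "t134 = {1,3,4}"
definition t234 :: "nat set" where "t234 = {2,3,4}"

definition triple_seq :: "nat set list" where
  "triple_seq = [t123, t124, t134, t234]"

definition Lambda :: "nat set set" where
  "Lambda = set triple_seq"

definition is_tiling :: "nat set set \<Rightarrow> bool" where
  "is_tiling T \<longleftrightarrow> (\<exists>k\<le>4. T = set (take k triple_seq) \<or> T = set (drop k triple_seq))"

definition sm :: "'v set \<Rightarrow> ('v \<Rightarrow> nat set set) \<Rightarrow> nat set set" where
  "sm V T = {t \<in> Lambda. 2 * card {v \<in> V. t \<in> T v} > card V}"

text \<open>Condorcet super-domain. Finite index sets V are taken inside nat;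
  every finite set is in bijection with a finite subset of nat.\<close>
definition condorcet_super_domain :: "nat set set set \<Rightarrow> bool" where
  "condorcet_super_domain D \<longleftrightarrow>
     (\<forall>T\<in>D. is_tiling T) \<and>
     (\<forall>(V::nat set) T. finite V \<and> odd (card V) \<and> (\<forall>v\<in>V. T v \<in> D) \<longrightarrow> is_tiling (sm V T))"

definition maximal_condorcet_super_domain :: "nat set set set \<Rightarrow> bool" where
  "maximal_condorcet_super_domain D \<longleftrightarrow>
     condorcet_super_domain D \<and>
     (\<forall>D'. condorcet_super_domain D' \<and> D \<subseteq> D' \<longrightarrow> D' = D)"

definition wheel_list :: "nat set set list" where
  "wheel_list = [{}, {t123}, {t123, t124}, {t123, t124, t134}, {t123, t124, t134, t234},
                 {t124, t134, t234}, {t134, t234}, {t234}]"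

definition wheel :: "nat \<Rightarrow> nat set set" where
  "wheel i = wheel_list ! (i mod 8)"

definition type_I :: "nat set set set \<Rightarrow> bool" where
  "type_I D \<longleftrightarrow> (\<exists>i<8. D = {wheel (i + j) | j. j < 5})"

definition type_II :: "nat set set set \<Rightarrow> bool" where
  "type_II D \<longleftrightarrow> (\<exists>T T'. is_tiling T \<and> is_tiling T' \<and>
      {T, Lambda - T} \<noteq> {T', Lambda - T'} \<and>
      D = {T, Lambda - T} \<union> {T', Lambda - T'})"

end

theory Submission
  imports Defs
begin

text \<open>
  Number the tilings along the wheel, so that every tiling is \<^term>\<open>wheel i\<close>. The triple
  \<^term>\<open>triple_seq ! k\<close> lies exactly in the tilings at positions k+1, ..., k+4 modulo 8: every
  triple is supported on a half of the wheel, and opposite tilings sit at antipodal positions.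

  On five consecutive positions each of these supports is an initial or a final segment, so
  the majority of any odd profile is the tiling of a median voter. For a domain made of two
  opposite pairs, two voters with opposite tilings cancel in every majority; after cancelling
  them only one tiling of each pair remains, and two tilings always form such a line as well.

  Conversely, the majority of \<^term>\<open>wheel i\<close>, \<^term>\<open>wheel (i + 2)\<close>, \<^term>\<open>wheel (i + 5)\<close>
  is never a tiling, and the sets of positions avoiding all these triples are exactly the
  subsets of five consecutive positions or of two antipodal pairs. A domain of type (I) has
  five elements and only one opposite pair, a domain of type (II) has four elements, so no
  domain of either type contains another one.
\<close>

section \<open>The octahedral wheel\<close>

lemma less_4_iff: "(j::nat) < 4 \<longleftrightarrow> j = 0 \<or> j = 1 \<or> j = 2 \<or> j = 3"
  by auto

lemma less_5_iff: "(j::nat) < 5 \<longleftrightarrow> j = 0 \<or> j = 1 \<or> j = 2 \<or> j = 3 \<or> j = 4"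
  by auto

lemma less_8_iff: "(j::nat) < 8 \<longleftrightarrow> j = 0 \<or> j = 1 \<or> j = 2 \<or> j = 3 \<or> j = 4 \<or> j = 5 \<or> j = 6 \<or> j = 7"
  by auto

lemma triples_distinct: "distinct triple_seq"
proof -
  have "map (sum id) triple_seq = [6, 7, 8, 9]"
    by (simp add: triple_seq_def t123_def t124_def t134_def t234_def)
  then have "distinct (map (sum id) triple_seq)" by simp
  then show ?thesis by (simp add: distinct_map)
qed

lemma triples_neq: "t123 \<noteq> t124" "t123 \<noteq> t134" "t123 \<noteq> t234" "t124 \<noteq> t134" "t124 \<noteq> t234" "t134 \<noteq> t234"
  using triples_distinct by (simp_all add: triple_seq_def)

lemma length_triple_seq [simp]: "length triple_seq = 4"
  by (simp add: triple_seq_def)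

lemma Lambda_diff_neq:
  assumes "X \<subseteq> Lambda"
  shows "Lambda - X \<noteq> X"
proof -
  have "Lambda \<noteq> {}" by (simp add: Lambda_def triple_seq_def)
  then show ?thesis using assms by blast
qed

lemma subset_Lambda_eqI:
  assumes "X \<subseteq> Lambda" "Y \<subseteq> Lambda" "\<And>k. k < 4 \<Longrightarrow> triple_seq ! k \<in> X \<longleftrightarrow> triple_seq ! k \<in> Y"
  shows "X = Y"
proof (rule set_eqI)
  fix t
  show "t \<in> X \<longleftrightarrow> t \<in> Y"
  proof (cases "t \<in> Lambda")
    case True
    then obtain k where "k < 4" "t = triple_seq ! k" by (auto simp: Lambda_def in_set_conv_nth)
    then show ?thesis using assms(3) by simp
  next
    case False
    then show ?thesis using assms(1,2) by blast
  qed
qed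

lemma wheel_list_membership: "\<forall>r<8. \<forall>k<4. triple_seq ! k \<in> wheel_list ! r \<longleftrightarrow> k < r \<and> r \<le> k + 4"
  using triples_neq by (simp add: All_less_Suc eval_nat_numeral wheel_list_def triple_seq_def eq_commute)

lemma triple_in_wheel:
  assumes "k < 4"
  shows "triple_seq ! k \<in> wheel i \<longleftrightarrow> k < i mod 8 \<and> i mod 8 \<le> k + 4"
  using wheel_list_membership assms by (simp add: wheel_def)

lemma wheel_subset_Lambda: "wheel i \<subseteq> Lambda"
proof -
  have "wheel i \<in> set wheel_list" unfolding wheel_def by (rule nth_mem) (simp add: wheel_list_def)
  then show ?thesis by (auto simp: wheel_list_def Lambda_def triple_seq_def)
qed

lemma wheel_list_distinct: "distinct wheel_list"
proof -
  have "map (\<lambda>X. map (\<lambda>t. t \<in> X) triple_seq) wheel_list =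
    [[False, False, False, False], [True, False, False, False], [True, True, False, False],
     [True, True, True, False], [True, True, True, True], [False, True, True, True],
     [False, False, True, True], [False, False, False, True]]"
    using triples_neq by (simp add: wheel_list_def triple_seq_def eq_commute)
  then have "distinct (map (\<lambda>X. map (\<lambda>t. t \<in> X) triple_seq) wheel_list)" by simp
  then show ?thesis by (simp add: distinct_map)
qed

lemma wheel_eq_iff: "wheel i = wheel j \<longleftrightarrow> i mod 8 = j mod 8"
  using nth_eq_iff_index_eq[OF wheel_list_distinct, of "i mod 8" "j mod 8"]
  by (simp add: wheel_def wheel_list_def)

lemma Lambda_diff_wheel: "Lambda - wheel i = wheel (i + 4)"
proof (rule subset_Lambda_eqI)
  fix k :: nat
  assume "k < 4"
  moreover have "(i + 4) mod 8 = (if i mod 8 < 4 then i mod 8 + 4 else i mod 8 - 4)"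
    by presburger
  moreover have "i mod 8 < 8" by simp
  ultimately show "triple_seq ! k \<in> Lambda - wheel i \<longleftrightarrow> triple_seq ! k \<in> wheel (i + 4)"
    by (simp add: triple_in_wheel Lambda_def) linarith
qed (auto simp: wheel_subset_Lambda)

lemma tiling_segments:
  assumes "k \<le> 4"
  shows "set (take k triple_seq) = wheel k" "set (drop k triple_seq) = wheel (k + 4)"
proof -
  have "k \<in> {0, 1, 2, 3, 4}" using assms by auto
  then show "set (take k triple_seq) = wheel k" "set (drop k triple_seq) = wheel (k + 4)"
    by (auto simp: triple_seq_def wheel_def wheel_list_def)
qed

lemma is_tiling_iff: "is_tiling X \<longleftrightarrow> (\<exists>i. X = wheel i)"
proof
  assume "\<exists>i. X = wheel i"
  then obtain i where "X = wheel i" by blast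
  then have X: "X = wheel (i mod 8)" by (simp add: wheel_eq_iff)
  have "i mod 8 < 8" by simp
  then consider "i mod 8 \<le> 4" | "i mod 8 - 4 \<le> 4" "i mod 8 = i mod 8 - 4 + 4" by linarith
  then show "is_tiling X"
    unfolding is_tiling_def X using tiling_segments by cases metis+
qed (auto simp: is_tiling_def tiling_segments)

lemma mod_4_eq_iff_mod_8: "(a::nat) mod 4 = b mod 4 \<longleftrightarrow> b mod 8 = a mod 8 \<or> b mod 8 = (a + 4) mod 8"
proof -
  have "r mod 4 = s mod 4 \<longleftrightarrow> s = r \<or> s = (r + 4) mod 8" if "r < 8" "s < 8" for r s :: nat
    using that unfolding less_8_iff by (elim disjE) simp_all
  from this[of "a mod 8" "b mod 8"] show ?thesis by (simp add: mod_mod_cancel mod_add_left_eq)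
qed

section \<open>Majority on a line\<close>

lemma card_majority_not:
  assumes "finite V" "odd (card V)"
  shows "card V < 2 * card {v\<in>V. \<not> P v} \<longleftrightarrow> \<not> card V < 2 * card {v\<in>V. P v}"
proof -
  have "{v\<in>V. \<not> P v} = V - {v\<in>V. P v}" by blast
  then have "card {v\<in>V. \<not> P v} = card V - card {v\<in>V. P v}"
    using assms(1) by (simp add: card_Diff_subset)
  moreover have "card {v\<in>V. P v} \<le> card V" using assms(1) by (simp add: card_mono)
  moreover have "card V \<noteq> 2 * card {v\<in>V. P v}" using assms(2) by auto
  ultimately show ?thesis by linarith
qed

lemma median_voter:
  fixes f :: "'v \<Rightarrow> nat"
  assumes "finite V" "odd (card V)"
  obtains w where "w \<in> V" "\<And>P. mono P \<Longrightarrow> card V < 2 * card {v\<in>V. P (f v)} \<longleftrightarrow> P (f w)"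
proof -
  define upper where "upper k = {v\<in>V. k \<le> f v}" for k
  define m where "m = (GREATEST k. card V < 2 * card (upper k))"
  have maj_0: "card V < 2 * card (upper 0)"
    using assms(2) by (auto simp: upper_def odd_pos)
  have bounded: "k \<le> Max (f ` V)" if "card V < 2 * card (upper k)" for k
  proof (rule ccontr)
    assume "\<not> k \<le> Max (f ` V)"
    moreover have "f v \<le> Max (f ` V)" if "v \<in> V" for v using assms(1) that by simp
    ultimately have "upper k = {}" by (fastforce simp: upper_def)
    then show False using that by simp
  qed
  have maj_m: "card V < 2 * card (upper m)"
    unfolding m_def using maj_0 bounded by (rule GreatestI_nat)
  have "k \<le> m" if "card V < 2 * card (upper k)" for k
    unfolding m_def using that bounded by (rule Greatest_le_nat)
  then have not_maj: "\<not> card V < 2 * card (upper (Suc m))" by fastforce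
  then have "upper m \<noteq> upper (Suc m)" using maj_m by auto
  moreover have "upper (Suc m) \<subseteq> upper m" by (auto simp: upper_def)
  ultimately obtain w where "w \<in> upper m - upper (Suc m)" by blast
  then have w: "w \<in> V" "f w = m" by (auto simp: upper_def)
  show thesis
  proof (rule that[OF \<open>w \<in> V\<close>])
    fix P :: "nat \<Rightarrow> bool"
    assume "mono P"
    then have up: "P y" if "P x" "x \<le> y" for x y
      using that by (metis le_boolD monoD)
    show "card V < 2 * card {v\<in>V. P (f v)} \<longleftrightarrow> P (f w)"
    proof (cases "P m")
      case True
      then have "upper m \<subseteq> {v\<in>V. P (f v)}" using up by (auto simp: upper_def)
      then have "card (upper m) \<le> card {v\<in>V. P (f v)}" using assms(1) by (simp add: card_mono)
      then show ?thesis using maj_m True w(2) by simp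
    next
      case False
      then have "{v\<in>V. P (f v)} \<subseteq> upper (Suc m)"
        using up by (force simp: upper_def not_less_eq_eq[symmetric])
      then have "card {v\<in>V. P (f v)} \<le> card (upper (Suc m))"
        using assms(1) by (simp add: card_mono upper_def)
      then show ?thesis using not_maj False w(2) by simp
    qed
  qed
qed

lemma sm_eq_median_on_line:
  fixes L :: "nat \<Rightarrow> nat set set" and f :: "'v \<Rightarrow> nat"
  assumes "finite V" "odd (card V)" "\<forall>v\<in>V. T v = L (f v)" "\<And>p. L p \<subseteq> Lambda"
    and monotone: "\<And>t. t \<in> Lambda \<Longrightarrow> mono (\<lambda>p. t \<in> L p) \<or> antimono (\<lambda>p. t \<in> L p)"
  shows "\<exists>w\<in>V. sm V T = T w"
proof -
  obtain w where "w \<in> V"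
    and median: "\<And>P. mono P \<Longrightarrow> card V < 2 * card {v\<in>V. P (f v)} \<longleftrightarrow> P (f w)"
    using median_voter[OF assms(1,2)] by blast
  have "t \<in> sm V T \<longleftrightarrow> t \<in> L (f w)" if "t \<in> Lambda" for t
  proof -
    have "{v\<in>V. t \<in> T v} = {v\<in>V. t \<in> L (f v)}" using assms(3) by auto
    moreover have "card V < 2 * card {v\<in>V. t \<in> L (f v)} \<longleftrightarrow> t \<in> L (f w)"
      using monotone[OF that]
    proof
      assume "mono (\<lambda>p. t \<in> L p)"
      then show ?thesis using median by blast
    next
      assume "antimono (\<lambda>p. t \<in> L p)"
      then have "mono (\<lambda>p. t \<notin> L p)" unfolding monotone_def le_bool_def by blast
      then show ?thesis
        using median[of "\<lambda>p. t \<notin> L p"] card_majority_not[OF assms(1,2)] by simp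
    qed
    ultimately show ?thesis using that by (simp add: sm_def)
  qed
  then have "sm V T = L (f w)" using assms(4) by (auto simp: sm_def)
  then show ?thesis using \<open>w \<in> V\<close> assms(3) by auto
qed

section \<open>Cancelling opposite voters\<close>

lemma card_Diff_two:
  assumes "finite A" "a \<in> A" "b \<in> A" "a \<noteq> b"
  shows "card A = card (A - {a, b}) + 2"
proof -
  have "card {a, b} = 2" "{a, b} \<subseteq> A" using assms by auto
  then show ?thesis using assms(1) card_Diff_subset[of "{a, b}" A] card_mono[of A "{a, b}"] by simp
qed

lemma sm_remove_opposite_pair:
  assumes "finite V" "u \<in> V" "u' \<in> V" "T u \<subseteq> Lambda" "T u' = Lambda - T u"
  shows "sm (V - {u, u'}) T = sm V T"
proof -
  have "u \<noteq> u'" using Lambda_diff_neq[OF assms(4)] assms(5) by auto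
  then have card_V: "card V = card (V - {u, u'}) + 2"
    using assms(1-3) by (rule card_Diff_two[rotated -1])
  have "card {v\<in>V. t \<in> T v} = card {v\<in>V - {u, u'}. t \<in> T v} + 1" if "t \<in> Lambda" for t
  proof -
    define s where "s = (if t \<in> T u then u else u')"
    have "{v\<in>V. t \<in> T v} = insert s {v\<in>V - {u, u'}. t \<in> T v}"
      using assms(2-5) that \<open>u \<noteq> u'\<close> by (auto simp: s_def)
    moreover have "s \<notin> {v\<in>V - {u, u'}. t \<in> T v}" by (simp add: s_def)
    ultimately show ?thesis using assms(1) by simp
  qed
  then show ?thesis using card_V by (auto simp: sm_def)
qed

lemma opposite_free_subprofile:
  assumes "finite V" "odd (card V)" "\<forall>v\<in>V. T v \<subseteq> Lambda"
  shows "\<exists>V'\<subseteq>V. odd (card V') \<and> sm V' T = sm V T \<and> (\<forall>u\<in>V'. \<forall>u'\<in>V'. T u' \<noteq> Lambda - T u)"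
  using assms
proof (induction "card V" arbitrary: V rule: less_induct)
  case less
  show ?case
  proof (cases "\<exists>u\<in>V. \<exists>u'\<in>V. T u' = Lambda - T u")
    case True
    then obtain u u' where pair: "u \<in> V" "u' \<in> V" "T u' = Lambda - T u" by blast
    let ?W = "V - {u, u'}"
    have sm_W: "sm ?W T = sm V T"
      using sm_remove_opposite_pair[OF less.prems(1) pair(1,2) _ pair(3)] less.prems(3) pair(1) by blast
    have "u \<noteq> u'" using Lambda_diff_neq less.prems(3) pair by metis
    then have "card V = card ?W + 2"
      using less.prems(1) pair(1,2) by (rule card_Diff_two[rotated -1])
    then have "card ?W < card V" "odd (card ?W)" using less.prems(2) by simp_all
    moreover have "finite ?W" "\<forall>v\<in>?W. T v \<subseteq> Lambda" using less.prems(1,3) by auto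
    ultimately obtain V' where "V' \<subseteq> ?W" "odd (card V')" "sm V' T = sm ?W T"
        "\<forall>u\<in>V'. \<forall>u'\<in>V'. T u' \<noteq> Lambda - T u"
      using less.hyps[of ?W] by meson
    then show ?thesis using sm_W by (intro exI[of _ V']) auto
  next
    case False
    then show ?thesis using less.prems(2) by (intro exI[of _ V]) auto
  qed
qed

section \<open>Domains of type (I) and (II)\<close>

lemma arc_window_monotone:
  fixes r k :: nat
  assumes "r < 8" "k < 4"
  shows "(\<forall>n<4. (k < (r + n) mod 8 \<and> (r + n) mod 8 \<le> k + 4) \<longrightarrow>
              (k < (r + Suc n) mod 8 \<and> (r + Suc n) mod 8 \<le> k + 4)) \<or>
         (\<forall>n<4. (k < (r + Suc n) mod 8 \<and> (r + Suc n) mod 8 \<le> k + 4) \<longrightarrow>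
              (k < (r + n) mod 8 \<and> (r + n) mod 8 \<le> k + 4))"
  using assms unfolding less_8_iff less_4_iff by (elim disjE) (simp_all add: all_conj_distrib)

text \<open>Clamping with \<^term>\<open>min p 4\<close> turns the five positions i, ..., i + 4 into a line indexed by all of \<^typ>\<open>nat\<close>.\<close>

lemma wheel_window_monotone:
  assumes "t \<in> Lambda"
  shows "mono (\<lambda>p. t \<in> wheel (i + min p 4)) \<or> antimono (\<lambda>p. t \<in> wheel (i + min p 4))"
proof -
  obtain k where k: "k < 4" "t = triple_seq ! k"
    using assms by (auto simp: Lambda_def in_set_conv_nth)
  define B where "B n \<longleftrightarrow> k < (i mod 8 + n) mod 8 \<and> (i mod 8 + n) mod 8 \<le> k + 4" for n
  have member: "t \<in> wheel (i + min p 4) \<longleftrightarrow> B (min p 4)" for p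
    unfolding k(2) B_def triple_in_wheel[OF k(1)] by (simp add: mod_add_left_eq)
  have "(\<forall>n<4. B n \<longrightarrow> B (Suc n)) \<or> (\<forall>n<4. B (Suc n) \<longrightarrow> B n)"
    unfolding B_def using arc_window_monotone[OF _ k(1), of "i mod 8"] by simp
  moreover have "B (min n 4) \<longrightarrow> B (min (Suc n) 4)" if "\<forall>n<4. B n \<longrightarrow> B (Suc n)" for n
    using that by (cases "n < 4") (auto simp: min_def)
  moreover have "B (min (Suc n) 4) \<longrightarrow> B (min n 4)" if "\<forall>n<4. B (Suc n) \<longrightarrow> B n" for n
    using that by (cases "n < 4") (auto simp: min_def)
  ultimately show ?thesis
    unfolding mono_iff_le_Suc antimono_iff_le_Suc unfolding le_bool_def member by blast
qed

lemma sm_in_profile_arc: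
  assumes "finite V" "odd (card V)" "\<forall>v\<in>V. T v \<in> {wheel (i + j) |j. j < 5}"
  shows "\<exists>w\<in>V. sm V T = T w"
proof -
  have "\<forall>v\<in>V. \<exists>p. T v = wheel (i + min p 4)"
  proof
    fix v
    assume "v \<in> V"
    then obtain j where j: "j < 5" "T v = wheel (i + j)" using assms(3) by auto
    then have "min j 4 = j" by simp
    then show "\<exists>p. T v = wheel (i + min p 4)" using j(2) by metis
  qed
  from bchoice[OF this] obtain f where "\<forall>v\<in>V. T v = wheel (i + min (f v) 4)" ..
  then show ?thesis
    using sm_eq_median_on_line[OF assms(1,2), of T "\<lambda>p. wheel (i + min p 4)" f]
      wheel_subset_Lambda wheel_window_monotone by blast
qed

lemma two_step_monotone:
  fixes a b :: bool
  shows "mono (\<lambda>p::nat. if p = 0 then a else b) \<or> antimono (\<lambda>p::nat. if p = 0 then a else b)"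
  unfolding mono_iff_le_Suc antimono_iff_le_Suc by (cases a; cases b) auto

lemma opposite_free_pair_choice:
  assumes "\<forall>u\<in>V. \<forall>u'\<in>V. T u' \<noteq> Lambda - T u" "v \<in> V" "T v = wheel c \<or> T v = wheel (c + 4)"
  shows "T v = wheel (if \<exists>v'\<in>V. T v' = wheel c then c else c + 4)"
proof (cases "\<exists>v'\<in>V. T v' = wheel c")
  case True
  then obtain v' where "v' \<in> V" "T v' = wheel c" by blast
  moreover have "T v \<noteq> Lambda - T v'" using assms(1,2) \<open>v' \<in> V\<close> by blast
  ultimately have "T v \<noteq> wheel (c + 4)" by (simp add: Lambda_diff_wheel)
  then show ?thesis using assms(3) True by auto
next
  case False
  then show ?thesis using assms(2,3) by auto
qed

lemma sm_in_profile_opposite_pairs: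
  assumes "finite V" "odd (card V)" "\<forall>v\<in>V. T v \<in> wheel ` {a, a + 4, b, b + 4}"
  shows "\<exists>w\<in>V. sm V T = T w"
proof -
  have "\<forall>v\<in>V. T v \<subseteq> Lambda" using assms(3) wheel_subset_Lambda by blast
  from opposite_free_subprofile[OF assms(1,2) this] obtain V'
    where V': "V' \<subseteq> V" "odd (card V')" "sm V' T = sm V T"
      and opposite_free: "\<forall>u\<in>V'. \<forall>u'\<in>V'. T u' \<noteq> Lambda - T u"
    by blast
  have "finite V'" using V'(1) assms(1) by (rule finite_subset)
  define x where "x = (if \<exists>v'\<in>V'. T v' = wheel a then a else a + 4)"
  define y where "y = (if \<exists>v'\<in>V'. T v' = wheel b then b else b + 4)"
  define L where "L p = (if p = 0 then wheel x else wheel y)" for p :: nat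
  have on_line: "\<forall>v\<in>V'. T v = L (if T v = wheel x then 0 else 1)"
  proof
    fix v
    assume "v \<in> V'"
    then have "T v = wheel a \<or> T v = wheel (a + 4) \<or> T v = wheel b \<or> T v = wheel (b + 4)"
      using assms(3) V'(1) by blast
    then have "T v = wheel x \<or> T v = wheel y"
      unfolding x_def y_def using opposite_free_pair_choice[OF opposite_free \<open>v \<in> V'\<close>] by blast
    then show "T v = L (if T v = wheel x then 0 else 1)" by (auto simp: L_def)
  qed
  have "mono (\<lambda>p. t \<in> L p) \<or> antimono (\<lambda>p. t \<in> L p)" for t
    using two_step_monotone[of "t \<in> wheel x" "t \<in> wheel y"] by (simp add: L_def if_distrib)
  moreover have "L p \<subseteq> Lambda" for p by (simp add: L_def wheel_subset_Lambda)
  ultimately obtain w where "w \<in> V'" "sm V' T = T w"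
    using sm_eq_median_on_line[OF \<open>finite V'\<close> \<open>odd (card V')\<close> on_line] by blast
  then show ?thesis using V'(1,3) by auto
qed

lemma type_II_iff: "type_II D \<longleftrightarrow> (\<exists>a b. a mod 4 \<noteq> b mod 4 \<and> D = wheel ` {a, a + 4, b, b + 4})"
proof
  assume "type_II D"
  then obtain a b where pairs: "{wheel a, Lambda - wheel a} \<noteq> {wheel b, Lambda - wheel b}"
      and D: "D = {wheel a, Lambda - wheel a} \<union> {wheel b, Lambda - wheel b}"
    unfolding type_II_def is_tiling_iff by blast
  have "a mod 4 \<noteq> b mod 4"
  proof
    assume "a mod 4 = b mod 4"
    then have "wheel b = wheel a \<or> wheel b = Lambda - wheel a"
      by (simp add: mod_4_eq_iff_mod_8 wheel_eq_iff Lambda_diff_wheel)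
    moreover have "Lambda - (Lambda - wheel a) = wheel a" using wheel_subset_Lambda by blast
    ultimately show False using pairs by auto
  qed
  moreover have "D = wheel ` {a, a + 4, b, b + 4}" using D by (auto simp: Lambda_diff_wheel)
  ultimately show "\<exists>a b. a mod 4 \<noteq> b mod 4 \<and> D = wheel ` {a, a + 4, b, b + 4}" by blast
next
  assume "\<exists>a b. a mod 4 \<noteq> b mod 4 \<and> D = wheel ` {a, a + 4, b, b + 4}"
  then obtain a b where "a mod 4 \<noteq> b mod 4" "D = wheel ` {a, a + 4, b, b + 4}" by blast
  moreover from \<open>a mod 4 \<noteq> b mod 4\<close> have "wheel b \<noteq> wheel a" "wheel b \<noteq> wheel (a + 4)"
    by (simp_all add: mod_4_eq_iff_mod_8 wheel_eq_iff)
  ultimately show "type_II D"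
    unfolding type_II_def is_tiling_iff
    by (intro exI[of _ "wheel a"] exI[of _ "wheel b"]) (auto simp: Lambda_diff_wheel doubleton_eq_iff)
qed

lemma sm_in_profile_of_type:
  assumes "type_I D \<or> type_II D" "finite V" "odd (card V)" "\<forall>v\<in>V. T v \<in> D"
  shows "\<exists>w\<in>V. sm V T = T w"
proof -
  consider (arc) i where "D = {wheel (i + j) |j. j < 5}" | (pairs) a b where "D = wheel ` {a, a + 4, b, b + 4}"
    using assms(1) unfolding type_I_def type_II_iff by blast
  then show ?thesis
  proof cases
    case arc
    show ?thesis using assms(4) unfolding arc by (rule sm_in_profile_arc[OF assms(2,3)])
  next
    case pairs
    show ?thesis using assms(4) unfolding pairs by (rule sm_in_profile_opposite_pairs[OF assms(2,3)])
  qed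
qed

lemma condorcet_super_domain_of_type:
  assumes "type_I D \<or> type_II D"
  shows "condorcet_super_domain D"
  unfolding condorcet_super_domain_def
proof (intro conjI allI impI)
  show tilings: "\<forall>X\<in>D. is_tiling X"
    using assms unfolding type_I_def type_II_iff is_tiling_iff by blast
  fix V :: "nat set" and T
  assume "finite V \<and> odd (card V) \<and> (\<forall>v\<in>V. T v \<in> D)"
  then obtain w where "w \<in> V" "sm V T = T w" using sm_in_profile_of_type[OF assms] by blast
  then show "is_tiling (sm V T)"
    using tilings \<open>finite V \<and> odd (card V) \<and> (\<forall>v\<in>V. T v \<in> D)\<close> by simp
qed

lemma card_type_I:
  assumes "type_I D"
  shows "card D = 5"
proof -
  obtain i where D: "D = (\<lambda>j. wheel (i + j)) ` {..<5}"
    using assms by (auto simp: type_I_def setcompr_eq_image lessThan_def)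
  have same: "p = q" if "p \<le> q" "q < 5" "(i + p) mod 8 = (i + q) mod 8" for p q
  proof -
    have "8 dvd (i + q) - (i + p)" using mod_eq_dvd_iff_nat[of "i + p" "i + q" 8] that by simp
    moreover have "(i + q) - (i + p) < 8" using that(2) by simp
    ultimately show ?thesis using that(1) by (cases "q - p = 0") (auto dest: dvd_imp_le)
  qed
  have "inj_on (\<lambda>j. wheel (i + j)) {..<5}"
  proof (rule inj_onI)
    fix p q
    assume "p \<in> {..<5}" "q \<in> {..<5}" "wheel (i + p) = wheel (i + q)"
    then show "p = q" using same[of p q] same[of q p] by (cases "p \<le> q") (auto simp: wheel_eq_iff)
  qed
  then show ?thesis by (simp add: D card_image)
qed

lemma card_type_II:
  assumes "type_II D"
  shows "card D = 4"
proof -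
  obtain a b where "a mod 4 \<noteq> b mod 4" and D: "D = {wheel a, wheel (a + 4), wheel b, wheel (b + 4)}"
    using assms by (auto simp: type_II_iff)
  then have "wheel a \<noteq> wheel b" "wheel a \<noteq> wheel (b + 4)" "wheel (a + 4) \<noteq> wheel b"
    "wheel (a + 4) \<noteq> wheel (b + 4)"
    using mod_4_eq_iff_mod_8[of a b] mod_4_eq_iff_mod_8[of a "b + 4"]
      mod_4_eq_iff_mod_8[of "a + 4" b] mod_4_eq_iff_mod_8[of "a + 4" "b + 4"]
    by (auto simp: wheel_eq_iff)
  moreover have "wheel c \<noteq> wheel (c + 4)" for c
    using Lambda_diff_neq[OF wheel_subset_Lambda, of c] by (simp add: Lambda_diff_wheel)
  ultimately show ?thesis by (simp add: D)
qed

lemma arc_opposite_pair_mod_4: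
  assumes "p < 5" "q < 5" "wheel a = wheel (i + p)" "wheel (a + 4) = wheel (i + q)"
  shows "a mod 4 = i mod 4"
proof -
  have key: "(r + p) mod 8 mod 4 = r mod 4" if "r < 8" "((r + p) mod 8 + 4) mod 8 = (r + q) mod 8" for r
    using that assms(1,2) unfolding less_8_iff less_5_iff by (elim disjE) simp_all
  have a: "a mod 8 = (i mod 8 + p) mod 8" and "(a + 4) mod 8 = (i mod 8 + q) mod 8"
    using assms(3,4) by (simp_all add: wheel_eq_iff mod_add_left_eq)
  then have "((i mod 8 + p) mod 8 + 4) mod 8 = (i mod 8 + q) mod 8" by (metis mod_add_left_eq)
  from key[OF _ this] have "a mod 8 mod 4 = i mod 8 mod 4" by (simp add: a)
  then show ?thesis by (simp add: mod_mod_cancel)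
qed

lemma type_domains_incomparable:
  assumes "type_I D \<or> type_II D" "type_I E \<or> type_II E" "D \<subseteq> E"
  shows "D = E"
proof -
  have "finite E" using assms(2) by (auto simp: type_I_def type_II_iff)
  have "\<not> (type_II D \<and> type_I E)"
  proof
    assume "type_II D \<and> type_I E"
    then obtain a b i where "a mod 4 \<noteq> b mod 4" "wheel ` {a, a + 4, b, b + 4} \<subseteq> {wheel (i + j) |j. j < 5}"
      using assms(3) by (auto simp: type_II_iff type_I_def)
    then have "a mod 4 = i mod 4" "b mod 4 = i mod 4"
      using arc_opposite_pair_mod_4[of _ _ a i] arc_opposite_pair_mod_4[of _ _ b i] by auto
    then show False using \<open>a mod 4 \<noteq> b mod 4\<close> by simp
  qed
  moreover have "card D \<le> card E" using \<open>finite E\<close> assms(3) by (rule card_mono)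
  ultimately have "card D = card E"
    using assms(1,2) card_type_I card_type_II by fastforce
  then show ?thesis using card_subset_eq[OF \<open>finite E\<close> assms(3)] by blast
qed

section \<open>Forbidden triples\<close>

lemma sm_three_voters:
  "sm {0, 1, 2 :: nat} (nth [X, Y, Z]) = Lambda \<inter> (X \<inter> Y \<union> Y \<inter> Z \<union> X \<inter> Z)"
proof -
  have "card {v \<in> {0, 1, 2 :: nat}. P v} = of_bool (P 0) + of_bool (P 1) + of_bool (P 2)" for P
  proof -
    have "{v \<in> {0, 1, 2 :: nat}. P v} = {0, 1, 2} \<inter> {v. P v}" by blast
    then show ?thesis using sum_of_bool_eq[of "{0, 1, 2 :: nat}" P] by simp
  qed
  then have majority: "card {0, 1, 2 :: nat} < 2 * card {v \<in> {0, 1, 2 :: nat}. t \<in> [X, Y, Z] ! v} \<longleftrightarrow>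
      t \<in> X \<and> t \<in> Y \<or> t \<in> Y \<and> t \<in> Z \<or> t \<in> X \<and> t \<in> Z" for t
    by (cases "t \<in> X"; cases "t \<in> Y"; cases "t \<in> Z") simp_all
  show ?thesis
  proof (rule set_eqI)
    fix t
    show "t \<in> sm {0, 1, 2} (nth [X, Y, Z]) \<longleftrightarrow> t \<in> Lambda \<inter> (X \<inter> Y \<union> Y \<inter> Z \<union> X \<inter> Z)"
      unfolding sm_def mem_Collect_eq Int_iff using majority[of t] by blast
  qed
qed

lemma median_pattern_not_arc:
  fixes r s :: nat
  defines "A x k \<equiv> k < x mod 8 \<and> x mod 8 \<le> k + 4"
  assumes "r < 8" "s < 8"
    and "\<And>k. k < 4 \<Longrightarrow> (A r k \<and> A (r + 2) k \<or> A (r + 2) k \<and> A (r + 5) k \<or> A r k \<and> A (r + 5) k) \<longleftrightarrow> A s k"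
  shows False
  using assms(2,3) assms(4)[of 0] assms(4)[of 1] assms(4)[of 2] assms(4)[of 3]
  unfolding less_8_iff A_def by (elim disjE) simp_all

lemma sm_wheel_triple_not_tiling:
  "\<not> is_tiling (sm {0, 1, 2 :: nat} (nth [wheel i, wheel (i + 2), wheel (i + 5)]))"
proof
  assume "is_tiling (sm {0, 1, 2} (nth [wheel i, wheel (i + 2), wheel (i + 5)]))"
  then obtain j where j: "Lambda \<inter> (wheel i \<inter> wheel (i + 2) \<union> wheel (i + 2) \<inter> wheel (i + 5) \<union>
      wheel i \<inter> wheel (i + 5)) = wheel j"
    unfolding is_tiling_iff sm_three_voters by blast
  show False
  proof (rule median_pattern_not_arc[of "i mod 8" "j mod 8"], goal_cases)
    case (3 k)
    then have "triple_seq ! k \<in> Lambda" by (simp add: Lambda_def)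
    with j have "triple_seq ! k \<in> wheel i \<and> triple_seq ! k \<in> wheel (i + 2) \<or>
        triple_seq ! k \<in> wheel (i + 2) \<and> triple_seq ! k \<in> wheel (i + 5) \<or>
        triple_seq ! k \<in> wheel i \<and> triple_seq ! k \<in> wheel (i + 5) \<longleftrightarrow> triple_seq ! k \<in> wheel j"
      by blast
    then show ?case using 3 by (simp add: triple_in_wheel mod_add_left_eq del: add_2_eq_Suc')
  qed simp_all
qed

lemma condorcet_excludes_wheel_triple:
  assumes "condorcet_super_domain D"
  shows "\<not> (wheel i \<in> D \<and> wheel (i + 2) \<in> D \<and> wheel (i + 5) \<in> D)"
proof
  assume "wheel i \<in> D \<and> wheel (i + 2) \<in> D \<and> wheel (i + 5) \<in> D"
  then have "\<forall>v\<in>{0, 1, 2}. [wheel i, wheel (i + 2), wheel (i + 5)] ! v \<in> D" by auto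
  moreover have "finite {0, 1, 2 :: nat}" "odd (card {0, 1, 2 :: nat})" by simp_all
  ultimately have "is_tiling (sm {0, 1, 2 :: nat} (nth [wheel i, wheel (i + 2), wheel (i + 5)]))"
    using assms unfolding condorcet_super_domain_def by blast
  then show False using sm_wheel_triple_not_tiling by blast
qed

lemma triple_free_residues:
  fixes P :: "nat \<Rightarrow> bool"
  assumes "\<And>i. i < 8 \<Longrightarrow> \<not> (P i \<and> P ((i + 2) mod 8) \<and> P ((i + 5) mod 8))"
  shows "(\<exists>i<8. \<forall>j<8. P j \<longrightarrow> (\<exists>m<5. j = (i + m) mod 8)) \<or>
    (\<exists>a<4. \<exists>b<4. a \<noteq> b \<and> (\<forall>j<8. P j \<longrightarrow> j mod 4 = a \<or> j mod 4 = b))"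
proof -
  have "\<not> (P 0 \<and> P 2 \<and> P 5)" "\<not> (P 1 \<and> P 3 \<and> P 6)" "\<not> (P 2 \<and> P 4 \<and> P 7)"
    "\<not> (P 3 \<and> P 5 \<and> P 0)" "\<not> (P 4 \<and> P 6 \<and> P 1)" "\<not> (P 5 \<and> P 7 \<and> P 2)"
    "\<not> (P 6 \<and> P 0 \<and> P 3)" "\<not> (P 7 \<and> P 1 \<and> P 4)"
    using assms[of 0] assms[of 1] assms[of 2] assms[of 3] assms[of 4] assms[of 5] assms[of 6] assms[of 7]
    by (simp_all add: numeral_2_eq_2[symmetric])
  then show ?thesis
    unfolding less_8_iff less_5_iff less_4_iff
    by (simp add: conj_disj_distribR ex_disj_distrib all_conj_distrib)
      (cases "P 0"; cases "P 1"; cases "P 2"; cases "P 3"; cases "P 4"; cases "P 5"; cases "P 6"; cases "P 7"; simp)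
qed

lemma condorcet_subset_type_domain:
  assumes "condorcet_super_domain D"
  shows "\<exists>E. (type_I E \<or> type_II E) \<and> D \<subseteq> E"
proof -
  define P where "P j \<longleftrightarrow> wheel j \<in> D" for j
  have wheel_mod: "wheel (j mod 8) = wheel j" for j by (simp add: wheel_eq_iff)
  have "\<not> (P i \<and> P ((i + 2) mod 8) \<and> P ((i + 5) mod 8))" for i
    using condorcet_excludes_wheel_triple[OF assms, of i] unfolding P_def wheel_mod .
  moreover have residue: "\<exists>j<8. P j \<and> X = wheel j" if X: "X \<in> D" for X
  proof -
    obtain j where "X = wheel j" using assms X by (auto simp: condorcet_super_domain_def is_tiling_iff)
    then show ?thesis using X by (intro exI[of _ "j mod 8"]) (simp add: P_def wheel_mod)
  qed
  ultimately consider (arc) i where "i < 8" "\<forall>j<8. P j \<longrightarrow> (\<exists>m<5. j = (i + m) mod 8)"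
    | (pairs) a b where "a < 4" "b < 4" "a \<noteq> b" "\<forall>j<8. P j \<longrightarrow> j mod 4 = a \<or> j mod 4 = b"
    using triple_free_residues[of P] by blast
  then show ?thesis
  proof cases
    case arc
    have "D \<subseteq> {wheel (i + m) |m. m < 5}"
      using residue arc(2) wheel_mod by fastforce
    moreover have "type_I {wheel (i + m) |m. m < 5}" using arc(1) by (auto simp: type_I_def)
    ultimately show ?thesis by blast
  next
    case pairs
    have "D \<subseteq> wheel ` {a, a + 4, b, b + 4}"
    proof
      fix X
      assume "X \<in> D"
      then obtain j where "P j" "X = wheel j" "j mod 4 = a \<or> j mod 4 = b" using residue pairs(4) by blast
      then show "X \<in> wheel ` {a, a + 4, b, b + 4}"
        using mod_4_eq_iff_mod_8[of a j] mod_4_eq_iff_mod_8[of b j] pairs(1,2)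
        by (auto simp: wheel_eq_iff)
    qed
    moreover have "type_II (wheel ` {a, a + 4, b, b + 4})"
      unfolding type_II_iff using pairs(1-3) by (intro exI[of _ a] exI[of _ b]) simp
    ultimately show ?thesis by blast
  qed
qed

lemma maximal_condorcet_super_domain_iff:
  "maximal_condorcet_super_domain D \<longleftrightarrow> type_I D \<or> type_II D"
proof
  assume "maximal_condorcet_super_domain D"
  then have "condorcet_super_domain D"
    and maximal: "\<And>D'. condorcet_super_domain D' \<Longrightarrow> D \<subseteq> D' \<Longrightarrow> D' = D"
    unfolding maximal_condorcet_super_domain_def by blast+
  then obtain E where "type_I E \<or> type_II E" "D \<subseteq> E" using condorcet_subset_type_domain by blast
  then show "type_I D \<or> type_II D" using maximal condorcet_super_domain_of_type by metis
next
  assume D: "type_I D \<or> type_II D"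
  have "D' = D" if D': "condorcet_super_domain D'" "D \<subseteq> D'" for D'
  proof -
    obtain E where "type_I E \<or> type_II E" "D' \<subseteq> E" using condorcet_subset_type_domain D'(1) by blast
    then show "D' = D" using type_domains_incomparable[OF D] D'(2) by blast
  qed
  then show "maximal_condorcet_super_domain D"
    unfolding maximal_condorcet_super_domain_def using condorcet_super_domain_of_type[OF D] by blast
qed

theorem mainTheorem6:
  shows "(\<forall>D. maximal_condorcet_super_domain D \<longleftrightarrow> type_I D \<or> type_II D) \<and>
         (\<forall>D. type_I D \<or> type_II D \<longrightarrow>
            (\<forall>(V::'v set) (T::'v \<Rightarrow> nat set set).
               finite V \<and> odd (card V) \<and> (\<forall>v\<in>V. T v \<in> D) \<longrightarrow> (\<exists>w\<in>V. sm V T = T w)))"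
  using maximal_condorcet_super_domain_iff sm_in_profile_of_type by blast

end
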